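(* Let $G$ be a weakly-reversible chemical reaction network in $s$ species and $\mathbf{k}$ a field of characteristic zero. If the ideal $(\mathcal{E}_G)\subseteq\mathbf{k}[x_1,\dots,x_s]$ is prime, then $G$ is not catalytic.
   Context: A chemical reaction network (CRN) consists of positive integers $s,n$, a finite directed graph $G$ with vertex set $\{1,\dots,n\}$ and edge set $E(G)$, and an injective labeling of vertex $i$ by a monic monomial $\psi_i=\prod_{j=1}^s x_j^{y_{ij}}$. $G$ is weakly-reversible iff each connected component is strongly connected. The associated event-system $\mathcal{E}_G$ is the set of binomials $\psi_i-\psi_j$, one for each pair $\{i,j\}$ with $(i,j)\in E(G)$ or $(j,i)\in E(G)$, and $(\mathcal{E}_G)$ is the ideal it generates. The event-graph $\overline{G}$ has as vertices all monic monomials in $x_1,\dots,x_s$, with an edge $(N\psi_i,N\psi_j)$ for each $(i,j)\in E(G)$ and each monic monomial $N$. A weakly-reversible CRN is catalytic iff there exist monic monomials $M,N$ path-connected in $\overline{G}$ such that $M/\gcd(M,N)$ and $N/\gcd(M,N)$ are not path-connected in $\overline{G}$. *)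

theory Defs
  imports "HOL-Library.Poly_Mapping"
begin

(* Species are indexed by a finite type 'v (so s = CARD('v)).
  Monic monomials in x_v are exponent vectors 'v \<Rightarrow>\<^sub>0 nat (multiplication of
  monomials = addition of exponent vectors); polynomials in k[x_v] are
  finitely supported maps from monomials to coefficients.*)

type_synonym 'v monom = "'v \<Rightarrow>\<^sub>0 nat"
type_synonym ('v, 'k) mpoly = "('v \<Rightarrow>\<^sub>0 nat) \<Rightarrow>\<^sub>0 'k"

lift_definition monom_gcd :: "'v monom \<Rightarrow> 'v monom \<Rightarrow> 'v monom"
  is "\<lambda>f g x. min (f x) (g x)"
proof -
  fix f g :: "'v \<Rightarrow> nat"
  assume "finite {x. f x \<noteq> 0}"
  then show "finite {x. min (f x) (g x) \<noteq> 0}"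
    by (rule finite_subset[rotated]) auto
qed

(* Quotient M / D of monomials where D divides M: subtraction of exponents.*)
definition monom_div :: "'v monom \<Rightarrow> 'v monom \<Rightarrow> 'v monom" where
  "monom_div M D = M - D"

definition is_crn :: "nat \<Rightarrow> (nat \<times> nat) set \<Rightarrow> (nat \<Rightarrow> 'v monom) \<Rightarrow> bool" where
  "is_crn n E psi \<longleftrightarrow> 0 < n \<and> E \<subseteq> {..<n} \<times> {..<n} \<and> inj_on psi {..<n}"

definition weakly_reversible :: "nat \<Rightarrow> (nat \<times> nat) set \<Rightarrow> bool" where
  "weakly_reversible n E \<longleftrightarrow>
     (\<forall>i<n. \<forall>j<n. (i, j) \<in> (E \<union> E\<inverse>)\<^sup>* \<longrightarrow> (i, j) \<in> E\<^sup>*)"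

definition event_system :: "(nat \<times> nat) set \<Rightarrow> (nat \<Rightarrow> 'v monom) \<Rightarrow> ('v, 'k::comm_ring_1) mpoly set" where
  "event_system E psi =
     {Poly_Mapping.single (psi i) 1 - Poly_Mapping.single (psi j) 1 | i j. (i, j) \<in> E}"

definition ideal_generated :: "'a::comm_ring_1 set \<Rightarrow> 'a set" where
  "ideal_generated S = {p. \<exists>F c. finite F \<and> F \<subseteq> S \<and> p = (\<Sum>f\<in>F. c f * f)}"

definition prime_ideal :: "'a::comm_ring_1 set \<Rightarrow> bool" where
  "prime_ideal I \<longleftrightarrow> I \<noteq> UNIV \<and> (\<forall>a b. a * b \<in> I \<longrightarrow> a \<in> I \<or> b \<in> I)"

definition event_graph :: "(nat \<times> nat) set \<Rightarrow> (nat \<Rightarrow> 'v monom) \<Rightarrow> ('v monom \<times> 'v monom) set" where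
  "event_graph E psi = {(N + psi i, N + psi j) | N i j. (i, j) \<in> E}"

definition path_connected_eg :: "(nat \<times> nat) set \<Rightarrow> (nat \<Rightarrow> 'v monom) \<Rightarrow> 'v monom \<Rightarrow> 'v monom \<Rightarrow> bool" where
  "path_connected_eg E psi M N \<longleftrightarrow> (M, N) \<in> (event_graph E psi)\<^sup>*"

definition catalytic :: "nat \<Rightarrow> (nat \<times> nat) set \<Rightarrow> (nat \<Rightarrow> 'v monom) \<Rightarrow> bool" where
  "catalytic n E psi \<longleftrightarrow> weakly_reversible n E \<and>
     (\<exists>M N. path_connected_eg E psi M N \<and>
        \<not> path_connected_eg E psi (monom_div M (monom_gcd M N)) (monom_div N (monom_gcd M N)))"

end

theory Submission
  imports Defs HOL.Modules
begin

text \<open>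
  If \<open>M\<close> and \<open>N\<close> are connected in the event
  graph then \<open>x^M - x^N \<in> I\<close>. Conversely, if a set \<open>C\<close> of monomials is a union of
  connected components of the undirected event graph, the linear form "sum of the
  coefficients on \<open>C\<close>" kills \<open>c (x^\<psi>\<^sub>i - x^\<psi>\<^sub>j)\<close> for every edge \<open>(i, j)\<close>, hence all of \<open>I\<close>.
  With \<open>C\<close> everything, no monomial lies in \<open>I\<close>; with \<open>C\<close> the component of \<open>M\<close>,
  \<open>x^M - x^N \<in> I\<close> forces \<open>M\<close> and \<open>N\<close> to be connected.

  So if \<open>M\<close>, \<open>N\<close> are connected and \<open>g = gcd(M, N)\<close>, then
  \<open>x^g (x^(M/g) - x^(N/g)) \<in> I\<close> while \<open>x^g \<notin> I\<close>; primality gives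
  \<open>x^(M/g) - x^(N/g) \<in> I\<close>, so \<open>M/g\<close> and \<open>N/g\<close> are connected, and weak reversibility
  makes undirected connectivity directed.
\<close>

interpretation ring_module: module "(*) :: 'a::comm_ring_1 \<Rightarrow> 'a \<Rightarrow> 'a"
  by unfold_locales (simp_all add: algebra_simps)

lemma ideal_generated_eq_span: "ideal_generated S = ring_module.span S"
  by (simp add: ideal_generated_def ring_module.span_explicit) blast

definition coeff_sum_on :: "'a set \<Rightarrow> ('a \<Rightarrow>\<^sub>0 'b::comm_monoid_add) \<Rightarrow> 'b" where
  "coeff_sum_on C p = (\<Sum>m\<in>Poly_Mapping.keys p \<inter> C. Poly_Mapping.lookup p m)"

lemma coeff_sum_on_superset:
  assumes "finite S" "Poly_Mapping.keys p \<subseteq> S"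
  shows "coeff_sum_on C p = (\<Sum>m\<in>S \<inter> C. Poly_Mapping.lookup p m)"
  unfolding coeff_sum_on_def
  by (rule sum.mono_neutral_left) (use assms in \<open>auto simp: in_keys_iff\<close>)

lemma additive_coeff_sum_on: "additive (coeff_sum_on C :: ('a \<Rightarrow>\<^sub>0 'b::ab_group_add) \<Rightarrow> 'b)"
proof
  fix p q :: "'a \<Rightarrow>\<^sub>0 'b"
  let ?S = "Poly_Mapping.keys p \<union> Poly_Mapping.keys q"
  have "coeff_sum_on C (p + q) = (\<Sum>m\<in>?S \<inter> C. Poly_Mapping.lookup (p + q) m)"
    by (rule coeff_sum_on_superset) (auto dest: keys_add[THEN subsetD])
  also have "\<dots> = coeff_sum_on C p + coeff_sum_on C q"
    by (subst (1 2) coeff_sum_on_superset[of ?S]) (auto simp: lookup_add sum.distrib)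
  finally show "coeff_sum_on C (p + q) = coeff_sum_on C p + coeff_sum_on C q" .
qed

lemma coeff_sum_on_single:
  "coeff_sum_on C (Poly_Mapping.single m a) = (if m \<in> C then a else 0)"
  by (subst coeff_sum_on_superset[of "{m}"]) auto

lemma coeff_sum_on_binomial:
  "coeff_sum_on C (Poly_Mapping.single m 1 - Poly_Mapping.single m' 1 :: 'a \<Rightarrow>\<^sub>0 'b::ring_1)
     = (if m \<in> C then 1 else 0) - (if m' \<in> C then 1 else 0)"
  by (simp add: additive.diff[OF additive_coeff_sum_on] coeff_sum_on_single)

text \<open>Multiplying by a term \<open>b x^a\<close> contributes \<open>b x^(a + x) - b x^(a + y)\<close>, whose two
  monomials are either both in \<open>C\<close> or both outside.\<close>
lemma coeff_sum_on_mult_binomial: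
  fixes c :: "('a::comm_monoid_add \<Rightarrow>\<^sub>0 'b::comm_ring_1)"
  assumes "\<And>K. K + x \<in> C \<longleftrightarrow> K + y \<in> C"
  shows "coeff_sum_on C (c * (Poly_Mapping.single x 1 - Poly_Mapping.single y 1)) = 0"
proof (induction c rule: update_induct)
  case const
  then show ?case by (simp add: coeff_sum_on_def)
next
  case (update f a b)
  have "Poly_Mapping.update a b f = f + Poly_Mapping.single a b"
    using update(1)
    by (intro poly_mapping_eqI) (auto simp: lookup_update lookup_add lookup_single in_keys_iff when_def)
  then have "Poly_Mapping.update a b f * (Poly_Mapping.single x 1 - Poly_Mapping.single y 1)
      = f * (Poly_Mapping.single x 1 - Poly_Mapping.single y 1)
        + (Poly_Mapping.single (a + x) b - Poly_Mapping.single (a + y) b)"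
    by (simp add: distrib_right right_diff_distrib mult_single)
  then show ?case
    using update.IH assms[of a]
    by (simp add: additive.add[OF additive_coeff_sum_on] additive.diff[OF additive_coeff_sum_on]
        coeff_sum_on_single)
qed

definition event_closed :: "(nat \<times> nat) set \<Rightarrow> (nat \<Rightarrow> 'v monom) \<Rightarrow> 'v monom set \<Rightarrow> bool" where
  "event_closed E psi C \<longleftrightarrow> (\<forall>K i j. (i, j) \<in> E \<longrightarrow> (K + psi i \<in> C \<longleftrightarrow> K + psi j \<in> C))"

lemma event_closed_UNIV: "event_closed E psi UNIV"
  by (simp add: event_closed_def)

lemma event_closed_component:
  "event_closed E psi {m. (M, m) \<in> (event_graph E psi \<union> (event_graph E psi)\<inverse>)\<^sup>*}"
  unfolding event_closed_def event_graph_def by (blast intro: rtrancl_into_rtrancl)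

lemma coeff_sum_on_event_ideal:
  assumes "event_closed E psi C"
    and "(p :: ('v, 'k::comm_ring_1) mpoly) \<in> ideal_generated (event_system E psi)"
  shows "coeff_sum_on C p = 0"
  using assms(2) unfolding ideal_generated_eq_span
proof (induction rule: ring_module.span_induct_alt)
  case base
  then show ?case by (simp add: coeff_sum_on_def)
next
  case (step c f q)
  then obtain i j where "f = Poly_Mapping.single (psi i) 1 - Poly_Mapping.single (psi j) 1" "(i, j) \<in> E"
    unfolding event_system_def by blast
  with assms(1) have "coeff_sum_on C (c * f) = 0"
    unfolding event_closed_def by (blast intro: coeff_sum_on_mult_binomial)
  with step.IH show ?case
    by (simp add: additive.add[OF additive_coeff_sum_on])
qed

lemma monomial_notin_event_ideal:
  "(Poly_Mapping.single m 1 :: ('v, 'k::comm_ring_1) mpoly) \<notin> ideal_generated (event_system E psi)"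
  using coeff_sum_on_event_ideal[OF event_closed_UNIV] by (fastforce simp: coeff_sum_on_single)

lemma binomial_in_event_ideal_imp_connected:
  assumes "(Poly_Mapping.single M 1 - Poly_Mapping.single N 1 :: ('v, 'k::comm_ring_1) mpoly)
             \<in> ideal_generated (event_system E psi)"
  shows "(M, N) \<in> (event_graph E psi \<union> (event_graph E psi)\<inverse>)\<^sup>*"
  using coeff_sum_on_event_ideal[OF event_closed_component[of E psi M] assms]
  by (simp add: coeff_sum_on_binomial split: if_splits)

lemma connected_imp_binomial_in_event_ideal:
  assumes "(M, N) \<in> (event_graph E psi)\<^sup>*"
  shows "(Poly_Mapping.single M 1 - Poly_Mapping.single N 1 :: ('v, 'k::comm_ring_1) mpoly)
           \<in> ideal_generated (event_system E psi)"
  using assms unfolding ideal_generated_eq_span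
proof (induction rule: rtrancl_induct)
  case base
  then show ?case by (simp add: ring_module.span_zero)
next
  case (step y z)
  then obtain K i j where edge: "y = K + psi i" "z = K + psi j" "(i, j) \<in> E"
    unfolding event_graph_def by blast
  have "(Poly_Mapping.single (psi i) 1 - Poly_Mapping.single (psi j) 1 :: ('v, 'k) mpoly)
          \<in> event_system E psi"
    unfolding event_system_def using edge(3) by blast
  moreover have "(Poly_Mapping.single y 1 - Poly_Mapping.single z 1 :: ('v, 'k) mpoly)
     = Poly_Mapping.single K 1 * (Poly_Mapping.single (psi i) 1 - Poly_Mapping.single (psi j) 1)"
    using edge by (simp add: right_diff_distrib mult_single)
  ultimately have "(Poly_Mapping.single y 1 - Poly_Mapping.single z 1 :: ('v, 'k) mpoly)
                     \<in> ring_module.span (event_system E psi)"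
    by (simp add: ring_module.span_base ring_module.span_scale)
  from ring_module.span_add[OF step.IH this] show ?case by simp
qed

lemma prime_event_ideal_cancel:
  fixes A B g :: "'v monom"
  assumes "prime_ideal (ideal_generated (event_system E psi :: ('v, 'k::comm_ring_1) mpoly set))"
    and "(Poly_Mapping.single (g + A) 1 - Poly_Mapping.single (g + B) 1 :: ('v, 'k) mpoly)
           \<in> ideal_generated (event_system E psi)"
  shows "(Poly_Mapping.single A 1 - Poly_Mapping.single B 1 :: ('v, 'k) mpoly)
           \<in> ideal_generated (event_system E psi)"
proof -
  have "(Poly_Mapping.single (g + A) 1 - Poly_Mapping.single (g + B) 1 :: ('v, 'k) mpoly)
      = Poly_Mapping.single g 1 * (Poly_Mapping.single A 1 - Poly_Mapping.single B 1)"
    by (simp add: right_diff_distrib mult_single)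
  with assms monomial_notin_event_ideal show ?thesis
    unfolding prime_ideal_def by metis
qed

lemma reaction_path_imp_event_path:
  assumes "(i, j) \<in> E\<^sup>*"
  shows "(K + psi i, K + psi j) \<in> (event_graph E psi)\<^sup>*"
  using assms
proof (induction rule: rtrancl_induct)
  case base
  then show ?case by simp
next
  case (step j l)
  then have "(K + psi j, K + psi l) \<in> event_graph E psi"
    unfolding event_graph_def by blast
  with step.IH show ?case by (rule rtrancl_into_rtrancl)
qed

lemma event_graph_reverse_path:
  assumes "is_crn n E psi" "weakly_reversible n E" "(M, N) \<in> event_graph E psi"
  shows "(N, M) \<in> (event_graph E psi)\<^sup>*"
proof -
  obtain K i j where edge: "M = K + psi i" "N = K + psi j" "(i, j) \<in> E"
    using assms(3) unfolding event_graph_def by blast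
  then have "i < n" "j < n" "(j, i) \<in> (E \<union> E\<inverse>)\<^sup>*"
    using assms(1) unfolding is_crn_def by auto
  with assms(2) have "(j, i) \<in> E\<^sup>*"
    unfolding weakly_reversible_def by blast
  with edge show ?thesis
    by (simp add: reaction_path_imp_event_path)
qed

lemma weakly_reversible_event_graph_connected:
  assumes "is_crn n E psi" "weakly_reversible n E"
    and "(M, N) \<in> (event_graph E psi \<union> (event_graph E psi)\<inverse>)\<^sup>*"
  shows "(M, N) \<in> (event_graph E psi)\<^sup>*"
proof -
  have "event_graph E psi \<union> (event_graph E psi)\<inverse> \<subseteq> (event_graph E psi)\<^sup>*"
    using event_graph_reverse_path[OF assms(1,2)] by auto
  then have "(event_graph E psi \<union> (event_graph E psi)\<inverse>)\<^sup>* \<subseteq> (event_graph E psi)\<^sup>*"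
    by (metis rtrancl_subset_rtrancl)
  with assms(3) show ?thesis by blast
qed

lemma monom_gcd_add_div:
  "monom_gcd M N + monom_div M (monom_gcd M N) = M"
  "monom_gcd M N + monom_div N (monom_gcd M N) = N"
  by (auto intro!: poly_mapping_eqI simp: monom_div_def lookup_add lookup_minus monom_gcd.rep_eq)

theorem theorem5p2:
  fixes n :: nat and E :: "(nat \<times> nat) set" and psi :: "nat \<Rightarrow> ('v::finite) monom"
  assumes "is_crn n E psi"
    and "weakly_reversible n E"
    and "prime_ideal (ideal_generated (event_system E psi :: ('v, 'k::field_char_0) mpoly set))"
  shows "\<not> catalytic n E psi"
proof
  assume "catalytic n E psi"
  then obtain M N where connected: "(M, N) \<in> (event_graph E psi)\<^sup>*"
    and "\<not> path_connected_eg E psi (monom_div M (monom_gcd M N)) (monom_div N (monom_gcd M N))"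
    unfolding catalytic_def path_connected_eg_def by blast
  moreover
  have "(Poly_Mapping.single M 1 - Poly_Mapping.single N 1 :: ('v, 'k) mpoly)
          \<in> ideal_generated (event_system E psi)"
    using connected by (rule connected_imp_binomial_in_event_ideal)
  then have "(Poly_Mapping.single (monom_div M (monom_gcd M N)) 1
               - Poly_Mapping.single (monom_div N (monom_gcd M N)) 1 :: ('v, 'k) mpoly)
          \<in> ideal_generated (event_system E psi)"
    using prime_event_ideal_cancel[OF assms(3), where g = "monom_gcd M N"
        and A = "monom_div M (monom_gcd M N)" and B = "monom_div N (monom_gcd M N)"]
    by (simp add: monom_gcd_add_div)
  then have "path_connected_eg E psi (monom_div M (monom_gcd M N)) (monom_div N (monom_gcd M N))"
    unfolding path_connected_eg_def
    by (intro weakly_reversible_event_graph_connected[OF assms(1,2)]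
        binomial_in_event_ideal_imp_connected)
  ultimately show False by blast
qed

end
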